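(* Let $C=xe_0B_1e_1B_2\cdots B_ke_ky$ be a subcubic chain with chain-blocks $(\overline{B_i},\bar e_i)$, $i\in[k]$, and assume $\delta(\overline{B_i},\bar e_i)+\widehat\delta(\overline{B_i},\bar e_i)\le 0$ for all $i\in[k]$. Then $\delta(\overline C,e_C)+\widehat\delta(\overline C,e_C)\le 0$, with equality if and only if $\delta(\overline{B_i},\bar e_i)+\widehat\delta(\overline{B_i},\bar e_i)=0$ for all $i\in[k]$.
   Context: Graphs are finite and may have loops and parallel edges unless called simple; a loop contributes 2 to the degree of its vertex, and a graph is subcubic if every vertex has degree at most 3. $n(G)$ is the number of vertices of $G$ and $n_2(G)$ the number of vertices of degree 2. A cycle is a connected 2-regular subgraph (so a loop, or a pair of parallel edges, forms a cycle). An even cover of $G$ is a spanning subgraph $F$ in which every vertex has degree 0 or 2; its excess is $\mathrm{exc}(F)=2c(F)+i(F)$, where $c(F)$ is the number of cycles and $i(F)$ the number of isolated vertices of $F$. For $e\in E(G)$, let $\mathcal E(G,e)$ (resp. $\widehat{\mathcal E}(G,e)$) be the set of even covers of $G$ containing (resp. not containing) $e$, and define $\mathrm{exc}(G,e)=\min_{F\in\mathcal E(G,e)}\mathrm{exc}(F)-2$, $\widehat{\mathrm{exc}}(G,e)=\min_{F\in\widehat{\mathcal E}(G,e)}\mathrm{exc}(F)$, $\delta(G,e)=\mathrm{exc}(G,e)-\frac{n(G)+n_2(G)}4$, $\widehat\delta(G,e)=\widehat{\mathrm{exc}}(G,e)-\frac{n(G)+n_2(G)}4$. A subcubic chain is a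 simple connected subcubic graph $C$ written as an alternating sequence $C=x e_0 B_1 e_1 B_2\cdots B_k e_k y$ ($k\ge 0$) such that: $\{e_0,\dots,e_k\}$ is exactly the set of cut-edges of $C$; the connected components of $C-\{e_0,\dots,e_k\}$ are $B_0,B_1,\dots,B_{k+1}$ with $V(B_0)=\{x\}$, $V(B_{k+1})=\{y\}$; each $B_i$ ($1\le i\le k$) is a single vertex or 2-connected; and $e_i$ joins a vertex of $B_i$ to a vertex of $B_{i+1}$ ($0\le i\le k$). Its endpoints are $x,y$ and its end edges are $e_0,e_k$. It is trivial if $k=0$. If $k\ge1$, let $x_i$ (resp. $y_i$) be the endpoint of $e_{i-1}$ (resp. $e_i$) in $B_i$; the chain-blocks of $C$ are the pairs $(\overline{B_i},\bar e_i)$, $i\in[k]$, where $\overline{B_i}$ is $B_i$ plus a new edge $\bar e_i=x_iy_i$ (a loop if $B_i$ is a single vertex), and the closure of $C$ is $(\overline C,e_C)$ where $\overline C$ is obtained from $C-\{x,y\}$ by adding a new edge $e_C=x_1y_k$. If $C$ is trivial we set $\mathrm{exc}(\overline C,e_C)=\widehat{\mathrm{exc}}(\overline C,e_C)=\delta(\overline C,e_C)=\widehat\delta(\overline C,e_C)=0$. *)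

theory Defs
  imports Main "HOL-Library.Extended_Real"
begin

text \<open>A graph is given by a vertex set, an edge set and an endpoint map.
  An edge e with gends G e = (u,v) joins u and v (unordered); it is a loop iff u = v.\<close>

record ('v, 'e) mgraph =
  gverts :: "'v set"
  gedges :: "'e set"
  gends  :: "'e \<Rightarrow> 'v \<times> 'v"

definition wf_graph :: "('v,'e) mgraph \<Rightarrow> bool" where
  "wf_graph G \<longleftrightarrow> finite (gverts G) \<and> finite (gedges G) \<and>
     (\<forall>e\<in>gedges G. fst (gends G e) \<in> gverts G \<and> snd (gends G e) \<in> gverts G)"

text \<open>Degree of v in the spanning subgraph with edge set F; a loop counts twice.\<close>
definition deg_in :: "('v,'e) mgraph \<Rightarrow> 'e set \<Rightarrow> 'v \<Rightarrow> nat" where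
  "deg_in G F v = card {e\<in>F. fst (gends G e) = v} + card {e\<in>F. snd (gends G e) = v}"

definition degree :: "('v,'e) mgraph \<Rightarrow> 'v \<Rightarrow> nat" where
  "degree G v = deg_in G (gedges G) v"

definition subcubic :: "('v,'e) mgraph \<Rightarrow> bool" where
  "subcubic G \<longleftrightarrow> (\<forall>v\<in>gverts G. degree G v \<le> 3)"

definition simple_graph :: "('v,'e) mgraph \<Rightarrow> bool" where
  "simple_graph G \<longleftrightarrow>
     (\<forall>e\<in>gedges G. fst (gends G e) \<noteq> snd (gends G e)) \<and>
     (\<forall>e1\<in>gedges G. \<forall>e2\<in>gedges G.
        {fst (gends G e1), snd (gends G e1)} = {fst (gends G e2), snd (gends G e2)} \<longrightarrow> e1 = e2)"

definition n_verts :: "('v,'e) mgraph \<Rightarrow> nat" where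
  "n_verts G = card (gverts G)"

definition n_two :: "('v,'e) mgraph \<Rightarrow> nat" where
  "n_two G = card {v\<in>gverts G. degree G v = 2}"

definition reach :: "('v,'e) mgraph \<Rightarrow> 'e set \<Rightarrow> 'v \<Rightarrow> 'v \<Rightarrow> bool" where
  "reach G F u v \<longleftrightarrow>
     (\<lambda>a b. \<exists>e\<in>F \<inter> gedges G. gends G e = (a, b) \<or> gends G e = (b, a))\<^sup>*\<^sup>* u v"

definition components :: "('v,'e) mgraph \<Rightarrow> 'e set \<Rightarrow> 'v set set" where
  "components G F = {{v\<in>gverts G. reach G F u v} | u. u \<in> gverts G}"

definition connected_graph :: "('v,'e) mgraph \<Rightarrow> bool" where
  "connected_graph G \<longleftrightarrow> gverts G \<noteq> {} \<and>
     (\<forall>u\<in>gverts G. \<forall>v\<in>gverts G. reach G (gedges G) u v)"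

definition delete_vertex :: "('v,'e) mgraph \<Rightarrow> 'v \<Rightarrow> ('v,'e) mgraph" where
  "delete_vertex G v =
     \<lparr> gverts = gverts G - {v},
       gedges = {e\<in>gedges G. fst (gends G e) \<noteq> v \<and> snd (gends G e) \<noteq> v},
       gends = gends G \<rparr>"

text \<open>2-connected in the sense of Diestel: at least 3 vertices, connected,
  and connected after deleting any single vertex.\<close>
definition two_connected :: "('v,'e) mgraph \<Rightarrow> bool" where
  "two_connected G \<longleftrightarrow> card (gverts G) \<ge> 3 \<and> connected_graph G \<and>
     (\<forall>v\<in>gverts G. connected_graph (delete_vertex G v))"

definition cut_edge :: "('v,'e) mgraph \<Rightarrow> 'e \<Rightarrow> bool" where
  "cut_edge G e \<longleftrightarrow> e \<in> gedges G \<and>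
     \<not> reach G (gedges G - {e}) (fst (gends G e)) (snd (gends G e))"

definition even_cover :: "('v,'e) mgraph \<Rightarrow> 'e set \<Rightarrow> bool" where
  "even_cover G F \<longleftrightarrow> F \<subseteq> gedges G \<and> (\<forall>v\<in>gverts G. deg_in G F v \<in> {0, 2})"

text \<open>In an even cover every component containing an edge is a cycle, and
  every other component is an isolated vertex.\<close>
definition num_cycles :: "('v,'e) mgraph \<Rightarrow> 'e set \<Rightarrow> nat" where
  "num_cycles G F = card {K \<in> components G F. \<exists>e\<in>F. fst (gends G e) \<in> K}"

definition num_isolated :: "('v,'e) mgraph \<Rightarrow> 'e set \<Rightarrow> nat" where
  "num_isolated G F = card {v\<in>gverts G. deg_in G F v = 0}"

definition exc_cover :: "('v,'e) mgraph \<Rightarrow> 'e set \<Rightarrow> nat" where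
  "exc_cover G F = 2 * num_cycles G F + num_isolated G F"

text \<open>Minima over possibly empty sets are taken in the extended reals (min of empty = \<infinity>).\<close>
definition exc_with :: "('v,'e) mgraph \<Rightarrow> 'e \<Rightarrow> ereal" where
  "exc_with G e = (INF F \<in> {F. even_cover G F \<and> e \<in> F}. ereal (real (exc_cover G F))) - 2"

definition exc_without :: "('v,'e) mgraph \<Rightarrow> 'e \<Rightarrow> ereal" where
  "exc_without G e = (INF F \<in> {F. even_cover G F \<and> e \<notin> F}. ereal (real (exc_cover G F)))"

definition delta :: "('v,'e) mgraph \<Rightarrow> 'e \<Rightarrow> ereal" where
  "delta G e = exc_with G e - ereal ((real (n_verts G) + real (n_two G)) / 4)"

definition delta_hat :: "('v,'e) mgraph \<Rightarrow> 'e \<Rightarrow> ereal" where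
  "delta_hat G e = exc_without G e - ereal ((real (n_verts G) + real (n_two G)) / 4)"

text \<open>The chain C = x e_0 B_1 e_1 ... B_k e_k y is given by the graph C, the number k,
  the edges es 0, ..., es k, the vertex sets Bs 0, ..., Bs (k+1) of the blocks,
  and the vertices xs i (endpoint of e_(i-1) in B_i) and ys i (endpoint of e_i in B_i).
  The endpoints of the chain are x = ys 0 and y = xs (k+1).\<close>

definition block_graph ::
  "('v,'e) mgraph \<Rightarrow> nat \<Rightarrow> (nat \<Rightarrow> 'e) \<Rightarrow> (nat \<Rightarrow> 'v set) \<Rightarrow> nat \<Rightarrow> ('v,'e) mgraph" where
  "block_graph C k es Bs i =
     \<lparr> gverts = Bs i,
       gedges = {e \<in> gedges C - es ` {0..k}. fst (gends C e) \<in> Bs i \<and> snd (gends C e) \<in> Bs i},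
       gends = gends C \<rparr>"

definition subcubic_chain ::
  "('v,'e) mgraph \<Rightarrow> nat \<Rightarrow> (nat \<Rightarrow> 'e) \<Rightarrow> (nat \<Rightarrow> 'v set) \<Rightarrow> (nat \<Rightarrow> 'v) \<Rightarrow> (nat \<Rightarrow> 'v) \<Rightarrow> bool" where
  "subcubic_chain C k es Bs xs ys \<longleftrightarrow>
     wf_graph C \<and> simple_graph C \<and> connected_graph C \<and> subcubic C \<and>
     es ` {0..k} \<subseteq> gedges C \<and>
     {e\<in>gedges C. cut_edge C e} = es ` {0..k} \<and>
     components C (gedges C - es ` {0..k}) = Bs ` {0..k+1} \<and>
     inj_on Bs {0..k+1} \<and>
     Bs 0 = {ys 0} \<and> Bs (k+1) = {xs (k+1)} \<and>
     (\<forall>i\<in>{1..k}. card (Bs i) = 1 \<or> two_connected (block_graph C k es Bs i)) \<and>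
     (\<forall>i\<in>{0..k}. ys i \<in> Bs i \<and> xs (Suc i) \<in> Bs (Suc i) \<and>
        (gends C (es i) = (ys i, xs (Suc i)) \<or> gends C (es i) = (xs (Suc i), ys i)))"

text \<open>Chain-block (B_i bar, e_i bar): B_i plus a new edge None joining xs i and ys i
  (a loop if B_i is a single vertex). Old edges are tagged with Some.\<close>
definition chain_block ::
  "('v,'e) mgraph \<Rightarrow> nat \<Rightarrow> (nat \<Rightarrow> 'e) \<Rightarrow> (nat \<Rightarrow> 'v set) \<Rightarrow> (nat \<Rightarrow> 'v) \<Rightarrow> (nat \<Rightarrow> 'v)
     \<Rightarrow> nat \<Rightarrow> ('v, 'e option) mgraph" where
  "chain_block C k es Bs xs ys i =
     \<lparr> gverts = Bs i,
       gedges = insert None (Some ` gedges (block_graph C k es Bs i)),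
       gends = (\<lambda>f. case f of None \<Rightarrow> (xs i, ys i) | Some e \<Rightarrow> gends C e) \<rparr>"

text \<open>Closure (C bar, e_C): C - {x,y} plus a new edge None joining xs 1 and ys k.\<close>
definition chain_closure ::
  "('v,'e) mgraph \<Rightarrow> nat \<Rightarrow> (nat \<Rightarrow> 'v) \<Rightarrow> (nat \<Rightarrow> 'v) \<Rightarrow> ('v, 'e option) mgraph" where
  "chain_closure C k xs ys =
     \<lparr> gverts = gverts C - {ys 0, xs (k+1)},
       gedges = insert None (Some ` {e\<in>gedges C.
                   fst (gends C e) \<notin> {ys 0, xs (k+1)} \<and> snd (gends C e) \<notin> {ys 0, xs (k+1)}}),
       gends = (\<lambda>f. case f of None \<Rightarrow> (xs 1, ys k) | Some e \<Rightarrow> gends C e) \<rparr>"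

text \<open>delta + delta_hat of the closure, with the convention that it is 0 for a trivial chain.\<close>
definition closure_sum ::
  "('v,'e) mgraph \<Rightarrow> nat \<Rightarrow> (nat \<Rightarrow> 'v) \<Rightarrow> (nat \<Rightarrow> 'v) \<Rightarrow> ereal" where
  "closure_sum C k xs ys =
     (if k = 0 then 0
      else delta (chain_closure C k xs ys) None + delta_hat (chain_closure C k xs ys) None)"

end

theory Submission
  imports Defs
begin

text \<open>Write C' for the closure. Its vertices are those of the blocks B_1, ..., B_k, and its edges are
  those of the blocks together with the ring e_C, e_1, ..., e_(k-1), which visits the blocks in
  cyclic order. Each block is left by exactly two ring edges, so by parity an even cover of C'
  uses all ring edges or none. Restricting to the blocks and gluing back therefore identify the
  even covers of C' with the families of even covers of the chain-blocks that agree on whether they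
  use their new edges. Isolated vertices and cycles are counted blockwise, except that when the ring
  is used the k cycles through the new edges merge into one. The resulting loss of 2(k-1) in excess
  is exactly offset by the -2 in the definition of exc(G,e), applied once to C' and k times to the
  chain-blocks. As n and n_2 are additive too, delta and delta-hat of the closure are the sums of
  those of the chain-blocks, and a sum of nonpositive terms is nonpositive and vanishes only if
  every term does.\<close>

section \<open>Reachability and even covers\<close>

definition incidence :: "('v,'e) mgraph \<Rightarrow> 'e \<Rightarrow> 'v \<Rightarrow> nat" where
  "incidence G e v = (if fst (gends G e) = v then 1 else 0) + (if snd (gends G e) = v then 1 else 0)"

lemma card_filter_eq_sum: "finite A \<Longrightarrow> card {x\<in>A. P x} = (\<Sum>x\<in>A. if P x then 1 else 0)"
  by (simp flip: sum.inter_filter)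

lemma deg_in_eq_sum_incidence: "finite F \<Longrightarrow> deg_in G F v = (\<Sum>e\<in>F. incidence G e v)"
  unfolding deg_in_def incidence_def by (simp add: card_filter_eq_sum sum.distrib)

lemma deg_in_nonzero: "finite F \<Longrightarrow> e \<in> F \<Longrightarrow> deg_in G F (fst (gends G e)) \<noteq> 0"
  unfolding deg_in_def by (auto simp: card_eq_0_iff)

lemma reach_refl [simp]: "reach G F u u"
  unfolding reach_def by simp

lemma reach_sym: "reach G F u v \<Longrightarrow> reach G F v u"
proof -
  have "symp (\<lambda>a b. \<exists>e\<in>F \<inter> gedges G. gends G e = (a, b) \<or> gends G e = (b, a))"
    by (auto simp: symp_def)
  then show "reach G F u v \<Longrightarrow> reach G F v u"
    unfolding reach_def by (rule sympD[OF symp_rtranclp])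
qed

lemma reach_trans: "reach G F u v \<Longrightarrow> reach G F v w \<Longrightarrow> reach G F u w"
  unfolding reach_def by (rule rtranclp_trans)

lemma reach_edge:
  "e \<in> F \<Longrightarrow> e \<in> gedges G \<Longrightarrow> gends G e = (a, b) \<or> gends G e = (b, a) \<Longrightarrow> reach G F a b"
  unfolding reach_def by (rule r_into_rtranclp) blast

lemma reach_edge_ends: "e \<in> F \<Longrightarrow> e \<in> gedges G \<Longrightarrow> reach G F (fst (gends G e)) (snd (gends G e))"
  by (rule reach_edge) auto

lemma reach_transfer:
  assumes "\<And>e. e \<in> F \<Longrightarrow> e \<in> gedges H \<Longrightarrow> reach G F' (fst (gends H e)) (snd (gends H e))"
    and "reach H F u v"
  shows "reach G F' u v"
  using assms(2) unfolding reach_def[of H]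
proof (induction rule: rtranclp_induct)
  case (step y z)
  then obtain e where e: "e \<in> F" "e \<in> gedges H" "gends H e = (y, z) \<or> gends H e = (z, y)"
    by blast
  then have "reach G F' y z"
    using assms(1)[OF e(1,2)] by (auto intro: reach_sym)
  with step.IH show ?case by (rule reach_trans)
qed simp

definition comp_of :: "('v,'e) mgraph \<Rightarrow> 'e set \<Rightarrow> 'v \<Rightarrow> 'v set" where
  "comp_of G F u = {v\<in>gverts G. reach G F u v}"

lemma components_eq_image_comp_of: "components G F = comp_of G F ` gverts G"
  unfolding components_def comp_of_def by auto

lemma comp_of_eq: "reach G F a b \<Longrightarrow> comp_of G F a = comp_of G F b"
  unfolding comp_of_def by (auto intro: reach_trans reach_sym)

lemma comp_of_self: "a \<in> gverts G \<Longrightarrow> a \<in> comp_of G F a"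
  unfolding comp_of_def by simp

lemma comp_of_subset: "comp_of G F a \<subseteq> gverts G"
  unfolding comp_of_def by auto

lemma num_cycles_eq_card_comp_of:
  assumes wf: "wf_graph G" and FE: "F \<subseteq> gedges G"
  shows "num_cycles G F = card (comp_of G F ` {v\<in>gverts G. deg_in G F v \<noteq> 0})"
proof -
  have finF: "finite F" using wf FE unfolding wf_graph_def by (auto intro: finite_subset)
  have ends: "fst (gends G e) \<in> gverts G" "snd (gends G e) \<in> gverts G" if "e \<in> F" for e
    using wf FE that unfolding wf_graph_def by auto
  have "{K \<in> components G F. \<exists>e\<in>F. fst (gends G e) \<in> K}
      = comp_of G F ` {v\<in>gverts G. deg_in G F v \<noteq> 0}"
  proof (rule set_eqI, rule iffI)
    fix K assume "K \<in> {K \<in> components G F. \<exists>e\<in>F. fst (gends G e) \<in> K}"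
    then obtain u e where u: "u \<in> gverts G" "K = comp_of G F u" and e: "e \<in> F" "fst (gends G e) \<in> K"
      unfolding components_eq_image_comp_of by auto
    then have "K = comp_of G F (fst (gends G e))"
      using comp_of_eq unfolding comp_of_def by fastforce
    with e(1) show "K \<in> comp_of G F ` {v\<in>gverts G. deg_in G F v \<noteq> 0}"
      using ends deg_in_nonzero[OF finF] by blast
  next
    fix K assume "K \<in> comp_of G F ` {v\<in>gverts G. deg_in G F v \<noteq> 0}"
    then obtain v where v: "v \<in> gverts G" "deg_in G F v \<noteq> 0" "K = comp_of G F v" by auto
    from v(2) have "{e\<in>F. fst (gends G e) = v} \<noteq> {} \<or> {e\<in>F. snd (gends G e) = v} \<noteq> {}"
      unfolding deg_in_def by (metis add_0 card.empty)
    then obtain e where e: "e \<in> F" "fst (gends G e) = v \<or> snd (gends G e) = v" by blast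
    then have "reach G F v (fst (gends G e))"
      using FE reach_edge_ends[of e F G] reach_sym by fastforce
    then have "fst (gends G e) \<in> K"
      using v(3) ends(1)[OF e(1)] unfolding comp_of_def by simp
    then show "K \<in> {K \<in> components G F. \<exists>e\<in>F. fst (gends G e) \<in> K}"
      using v e(1) unfolding components_eq_image_comp_of by blast
  qed
  then show ?thesis unfolding num_cycles_def by simp
qed

text \<open>Handshake lemma on a vertex set S: summing the even degrees over S counts every edge with
  both ends in S twice and every edge leaving S once.\<close>

lemma even_card_crossing_edges:
  assumes wf: "wf_graph G" and FE: "F \<subseteq> gedges G"
    and ev: "\<forall>v\<in>gverts G. even (deg_in G F v)" and S: "S \<subseteq> gverts G"
  shows "even (card {e\<in>F. (fst (gends G e) \<in> S) \<noteq> (snd (gends G e) \<in> S)})"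
proof -
  have finF: "finite F" using wf FE unfolding wf_graph_def by (auto intro: finite_subset)
  have finS: "finite S" using wf S unfolding wf_graph_def by (auto intro: finite_subset)
  let ?cross = "\<lambda>e. (fst (gends G e) \<in> S) \<noteq> (snd (gends G e) \<in> S)"
  let ?inside = "\<lambda>e. fst (gends G e) \<in> S \<and> snd (gends G e) \<in> S"
  have inner: "(\<Sum>v\<in>S. incidence G e v) = (if ?cross e then 1 else 0) + 2 * (if ?inside e then 1 else 0)"
    for e
  proof -
    have "(\<Sum>v\<in>S. incidence G e v)
        = (if fst (gends G e) \<in> S then 1 else 0) + (if snd (gends G e) \<in> S then 1 else 0)"
      unfolding incidence_def using finS by (simp add: sum.distrib)
    then show ?thesis by auto
  qed
  have "(\<Sum>v\<in>S. deg_in G F v) = (\<Sum>v\<in>S. \<Sum>e\<in>F. incidence G e v)"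
    using finF by (simp add: deg_in_eq_sum_incidence)
  also have "\<dots> = (\<Sum>e\<in>F. \<Sum>v\<in>S. incidence G e v)"
    by (rule sum.swap)
  also have "\<dots> = (\<Sum>e\<in>F. (if ?cross e then 1 else 0) + 2 * (if ?inside e then 1 else 0))"
    using inner by simp
  also have "\<dots> = card {e\<in>F. ?cross e} + 2 * (\<Sum>e\<in>F. if ?inside e then 1 else 0)"
    using finF by (simp add: sum.distrib card_filter_eq_sum sum_distrib_left)
  finally have "(\<Sum>v\<in>S. deg_in G F v) = card {e\<in>F. ?cross e} + 2 * (\<Sum>e\<in>F. if ?inside e then 1 else 0)" .
  moreover have "even (\<Sum>v\<in>S. deg_in G F v)" using ev S by (intro dvd_sum) auto
  ultimately show ?thesis by simp
qed

lemma even_cover_no_bridge: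
  assumes wf: "wf_graph G" and ec: "even_cover G F" and e: "e \<in> F"
  shows "reach G (F - {e}) (fst (gends G e)) (snd (gends G e))"
proof (rule ccontr)
  let ?a = "fst (gends G e)" and ?b = "snd (gends G e)"
  assume nr: "\<not> reach G (F - {e}) ?a ?b"
  define S where "S = comp_of G (F - {e}) ?a"
  have FE: "F \<subseteq> gedges G" and ev: "\<forall>v\<in>gverts G. even (deg_in G F v)"
    using ec unfolding even_cover_def by auto
  have ab: "?a \<in> gverts G" "?b \<in> gverts G" using wf FE e unfolding wf_graph_def by auto
  have "{f\<in>F. (fst (gends G f) \<in> S) \<noteq> (snd (gends G f) \<in> S)} = {e}"
  proof (rule set_eqI, rule iffI)
    fix f assume f: "f \<in> {f\<in>F. (fst (gends G f) \<in> S) \<noteq> (snd (gends G f) \<in> S)}"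
    show "f \<in> {e}"
    proof (rule ccontr)
      assume "f \<notin> {e}"
      then have r: "reach G (F - {e}) (fst (gends G f)) (snd (gends G f))"
        using f FE by (intro reach_edge_ends) auto
      have "fst (gends G f) \<in> gverts G" "snd (gends G f) \<in> gverts G"
        using wf f FE unfolding wf_graph_def by auto
      then show False using f r reach_sym[OF r] unfolding S_def comp_of_def by (auto intro: reach_trans)
    qed
  qed (use e nr ab in \<open>auto simp: S_def comp_of_def\<close>)
  moreover have "even (card {f\<in>F. (fst (gends G f) \<in> S) \<noteq> (snd (gends G f) \<in> S)})"
    by (rule even_card_crossing_edges[OF wf FE ev]) (simp add: S_def comp_of_subset)
  ultimately show False by simp
qed

lemma ex_min_exc_cover:
  assumes wf: "wf_graph X" and ne: "\<exists>F. even_cover X F \<and> P F"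
  shows "\<exists>F0. even_cover X F0 \<and> P F0 \<and> (\<forall>F. even_cover X F \<and> P F \<longrightarrow> exc_cover X F0 \<le> exc_cover X F)"
proof -
  let ?S = "{F. even_cover X F \<and> P F}"
  have "?S \<subseteq> Pow (gedges X)" unfolding even_cover_def by auto
  then have fin: "finite ?S" using wf unfolding wf_graph_def by (auto intro: finite_subset)
  then have "Min (exc_cover X ` ?S) \<in> exc_cover X ` ?S" using ne by (intro Min_in) auto
  then obtain F0 where F0: "F0 \<in> ?S" "exc_cover X F0 = Min (exc_cover X ` ?S)" by auto
  then have "exc_cover X F0 \<le> exc_cover X F" if "F \<in> ?S" for F
    using fin that by simp
  with F0(1) show ?thesis by blast
qed

definition vertex_weight :: "('v,'e) mgraph \<Rightarrow> real" where
  "vertex_weight X = (real (n_verts X) + real (n_two X)) / 4"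

lemma delta_eq: "delta X e = exc_with X e - ereal (vertex_weight X)"
  unfolding delta_def vertex_weight_def ..

lemma delta_hat_eq: "delta_hat X e = exc_without X e - ereal (vertex_weight X)"
  unfolding delta_hat_def vertex_weight_def ..

lemma even_covers_exist_if_delta_sum_nonpos:
  assumes "delta X e + delta_hat X e \<le> 0"
  shows "\<exists>F. even_cover X F \<and> e \<in> F" and "\<exists>F. even_cover X F \<and> e \<notin> F"
proof -
  define a where "a = (INF F\<in>{F. even_cover X F \<and> e \<in> F}. ereal (real (exc_cover X F)))"
  define b where "b = (INF F\<in>{F. even_cover X F \<and> e \<notin> F}. ereal (real (exc_cover X F)))"
  have "0 \<le> a" "0 \<le> b" unfolding a_def b_def by (auto intro: INF_greatest)
  moreover have "(a - 2 - ereal (vertex_weight X)) + (b - ereal (vertex_weight X)) \<le> 0"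
    using assms unfolding delta_eq delta_hat_eq exc_with_def exc_without_def a_def b_def .
  ultimately have "a \<noteq> \<infinity>" "b \<noteq> \<infinity>" by (cases a; cases b; simp)+
  then show "\<exists>F. even_cover X F \<and> e \<in> F" and "\<exists>F. even_cover X F \<and> e \<notin> F"
    unfolding a_def b_def by (auto simp: top_ereal_def[symmetric])
qed

lemma sum_nonpos_eq_0_iff:
  fixes f :: "'a \<Rightarrow> 'b::ordered_comm_monoid_add"
  shows "finite A \<Longrightarrow> (\<And>x. x \<in> A \<Longrightarrow> f x \<le> 0) \<Longrightarrow> sum f A = 0 \<longleftrightarrow> (\<forall>x\<in>A. f x = 0)"
  by (induct set: finite) (simp_all add: add_nonpos_eq_0_iff sum_nonpos)

section \<open>The blocks of a subcubic chain\<close>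

locale nontrivial_chain =
  fixes C :: "('v,'e) mgraph" and k :: nat and es :: "nat \<Rightarrow> 'e"
    and Bs :: "nat \<Rightarrow> 'v set" and xs ys :: "nat \<Rightarrow> 'v"
  assumes chain: "subcubic_chain C k es Bs xs ys" and k_pos: "1 \<le> k"
begin

abbreviation "G \<equiv> chain_closure C k xs ys"
abbreviation "H \<equiv> chain_block C k es Bs xs ys"
abbreviation "cut_edges \<equiv> es ` {0..k}"

definition inner_edges :: "nat \<Rightarrow> 'e set" where
  "inner_edges i = gedges (block_graph C k es Bs i)"

definition ring :: "'e option set" where
  "ring = insert None (Some ` es ` {1..k-1})"

lemma wf_C: "wf_graph C"
  using chain unfolding subcubic_chain_def by simp

lemma chain_edge_in: "j \<le> k \<Longrightarrow> es j \<in> gedges C"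
  using chain unfolding subcubic_chain_def by auto

lemma chain_edge_ends:
  "j \<le> k \<Longrightarrow> ys j \<in> Bs j \<and> xs (Suc j) \<in> Bs (Suc j) \<and>
     (gends C (es j) = (ys j, xs (Suc j)) \<or> gends C (es j) = (xs (Suc j), ys j))"
  using chain unfolding subcubic_chain_def by auto

lemma block_first: "Bs 0 = {ys 0}" and block_last: "Bs (k+1) = {xs (k+1)}"
  using chain unfolding subcubic_chain_def by simp_all

lemma block_is_comp: "i \<le> k+1 \<Longrightarrow> \<exists>u\<in>gverts C. Bs i = comp_of C (gedges C - cut_edges) u"
proof -
  assume "i \<le> k+1"
  then have "Bs i \<in> components C (gedges C - cut_edges)"
    using chain unfolding subcubic_chain_def by auto
  then show ?thesis unfolding components_eq_image_comp_of by auto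
qed

lemma block_subset: "i \<le> k+1 \<Longrightarrow> Bs i \<subseteq> gverts C"
  using block_is_comp comp_of_subset by metis

lemma block_unique: "i \<le> k+1 \<Longrightarrow> j \<le> k+1 \<Longrightarrow> v \<in> Bs i \<Longrightarrow> v \<in> Bs j \<Longrightarrow> i = j"
proof -
  assume ij: "i \<le> k+1" "j \<le> k+1" and v: "v \<in> Bs i" "v \<in> Bs j"
  obtain u w where "Bs i = comp_of C (gedges C - cut_edges) u" "Bs j = comp_of C (gedges C - cut_edges) w"
    using block_is_comp ij by metis
  moreover from this v have "reach C (gedges C - cut_edges) u v" "reach C (gedges C - cut_edges) w v"
    unfolding comp_of_def by auto
  ultimately have "Bs i = Bs j" using comp_of_eq reach_sym by metis
  moreover have "inj_on Bs {0..k+1}" using chain unfolding subcubic_chain_def by simp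
  ultimately show "i = j" using ij by (auto dest: inj_onD)
qed

lemma in_block_iff: "j \<le> k+1 \<Longrightarrow> v \<in> Bs j \<Longrightarrow> i \<le> k+1 \<Longrightarrow> v \<in> Bs i \<longleftrightarrow> i = j"
  using block_unique by blast

lemma vertex_in_block: "v \<in> gverts C \<Longrightarrow> \<exists>i\<le>k+1. v \<in> Bs i"
proof -
  assume v: "v \<in> gverts C"
  have "comp_of C (gedges C - cut_edges) v \<in> Bs ` {0..k+1}"
    using chain v unfolding subcubic_chain_def components_eq_image_comp_of by blast
  then obtain i where "i \<le> k+1" "comp_of C (gedges C - cut_edges) v = Bs i" by auto
  then show ?thesis using comp_of_self[OF v] by auto
qed

lemma non_cut_edge_in_block:
  assumes "e \<in> gedges C" "e \<notin> cut_edges"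
  shows "\<exists>i\<le>k+1. fst (gends C e) \<in> Bs i \<and> snd (gends C e) \<in> Bs i"
proof -
  have ends: "fst (gends C e) \<in> gverts C" "snd (gends C e) \<in> gverts C"
    using wf_C assms unfolding wf_graph_def by auto
  obtain i u where i: "i \<le> k+1" "fst (gends C e) \<in> Bs i" "Bs i = comp_of C (gedges C - cut_edges) u"
    using vertex_in_block[OF ends(1)] block_is_comp by metis
  have "reach C (gedges C - cut_edges) (fst (gends C e)) (snd (gends C e))"
    using assms by (intro reach_edge_ends) auto
  with i ends(2) show ?thesis unfolding comp_of_def by (blast intro: reach_trans)
qed

lemma chain_edge_inj: "j \<le> k \<Longrightarrow> j' \<le> k \<Longrightarrow> es j = es j' \<Longrightarrow> j = j'"
proof -
  assume a: "j \<le> k" "j' \<le> k" "es j = es j'"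
  have A: "ys j \<in> Bs j" "xs (Suc j) \<in> Bs (Suc j)" and B: "ys j' \<in> Bs j'" "xs (Suc j') \<in> Bs (Suc j')"
    using chain_edge_ends a by auto
  have "{ys j, xs (Suc j)} = {fst (gends C (es j)), snd (gends C (es j))}"
    using chain_edge_ends[OF a(1)] by auto
  also have "\<dots> = {ys j', xs (Suc j')}"
    using chain_edge_ends[OF a(2)] a(3) by auto
  finally have eq: "{ys j, xs (Suc j)} = {ys j', xs (Suc j')}" .
  then have "ys j = ys j' \<or> ys j = xs (Suc j')" by blast
  then have "j = j' \<or> j = Suc j'"
    using A B a block_unique[of j j' "ys j"] block_unique[of j "Suc j'" "ys j"] by force
  moreover from eq have "xs (Suc j) = ys j' \<or> xs (Suc j) = xs (Suc j')" by blast
  then have "Suc j = j' \<or> Suc j = Suc j'"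
    using A B a block_unique[of "Suc j" j' "xs (Suc j)"] block_unique[of "Suc j" "Suc j'" "xs (Suc j)"] by force
  ultimately show "j = j'" by auto
qed

lemma ends_in_block: "i \<in> {1..k} \<Longrightarrow> xs i \<in> Bs i \<and> ys i \<in> Bs i"
  using chain_edge_ends[of i] chain_edge_ends[of "i-1"] by (cases i) auto

lemma not_chain_end_iff: "i \<le> k+1 \<Longrightarrow> v \<in> Bs i \<Longrightarrow> v \<notin> {ys 0, xs (k+1)} \<longleftrightarrow> i \<in> {1..k}"
proof -
  assume i: "i \<le> k+1" "v \<in> Bs i"
  have "v = ys 0 \<longleftrightarrow> i = 0" using block_unique[OF i(1) _ i(2), of 0] block_first i by auto
  moreover have "v = xs (k+1) \<longleftrightarrow> i = k+1" using block_unique[OF i(1) _ i(2), of "k+1"] block_last i by auto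
  ultimately show ?thesis using i(1) by auto
qed

lemma closure_verts: "gverts G = (\<Union>i\<in>{1..k}. Bs i)"
proof -
  have "v \<in> gverts C - {ys 0, xs (k+1)} \<longleftrightarrow> (\<exists>i\<in>{1..k}. v \<in> Bs i)" for v
  proof
    assume "v \<in> gverts C - {ys 0, xs (k+1)}"
    then show "\<exists>i\<in>{1..k}. v \<in> Bs i" using vertex_in_block not_chain_end_iff by blast
  next
    assume "\<exists>i\<in>{1..k}. v \<in> Bs i"
    then obtain i where i: "i \<in> {1..k}" "v \<in> Bs i" by blast
    then have "v \<in> gverts C" using block_subset[of i] by auto
    with i show "v \<in> gverts C - {ys 0, xs (k+1)}" using not_chain_end_iff[of i v] by auto
  qed
  then show ?thesis unfolding chain_closure_def by auto
qed

lemma inner_edges_iff: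
  "e \<in> inner_edges i \<longleftrightarrow>
     e \<in> gedges C \<and> e \<notin> cut_edges \<and> fst (gends C e) \<in> Bs i \<and> snd (gends C e) \<in> Bs i"
  unfolding inner_edges_def block_graph_def by auto

lemma closure_old_edges:
  "{e\<in>gedges C. fst (gends C e) \<notin> {ys 0, xs (k+1)} \<and> snd (gends C e) \<notin> {ys 0, xs (k+1)}}
     = es ` {1..k-1} \<union> (\<Union>i\<in>{1..k}. inner_edges i)" (is "?L = ?R")
proof (rule set_eqI)
  fix e
  consider (cut) j where "j \<le> k" "e = es j"
    | (inner) i where "i \<le> k+1" "e \<in> gedges C" "e \<notin> cut_edges"
        "fst (gends C e) \<in> Bs i" "snd (gends C e) \<in> Bs i"
    | (other) "e \<notin> gedges C"
    using non_cut_edge_in_block by fastforce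
  then show "e \<in> ?L \<longleftrightarrow> e \<in> ?R"
  proof cases
    case cut
    have "e \<in> ?L \<longleftrightarrow> j \<in> {1..k} \<and> Suc j \<in> {1..k}"
      using chain_edge_ends[OF cut(1)] chain_edge_in[OF cut(1)] cut
        not_chain_end_iff[of j "ys j"] not_chain_end_iff[of "Suc j" "xs (Suc j)"]
      by auto
    also have "\<dots> \<longleftrightarrow> j \<in> {1..k-1}" by auto
    also have "\<dots> \<longleftrightarrow> e \<in> ?R"
    proof
      assume "e \<in> ?R"
      moreover have "e \<notin> (\<Union>i\<in>{1..k}. inner_edges i)" using cut by (auto simp: inner_edges_iff)
      ultimately obtain j' where "j' \<in> {1..k-1}" "es j = es j'" using cut by auto
      then show "j \<in> {1..k-1}" using chain_edge_inj[OF cut(1), of j'] by auto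
    qed (use cut in auto)
    finally show ?thesis .
  next
    case inner
    have "e \<in> ?L \<longleftrightarrow> i \<in> {1..k}"
      using inner not_chain_end_iff by auto
    also have "\<dots> \<longleftrightarrow> e \<in> (\<Union>i\<in>{1..k}. inner_edges i)"
    proof
      assume "e \<in> (\<Union>i\<in>{1..k}. inner_edges i)"
      then obtain i' where "i' \<in> {1..k}" "fst (gends C e) \<in> Bs i'"
        by (auto simp: inner_edges_iff)
      then show "i \<in> {1..k}" using block_unique[of i' i "fst (gends C e)"] inner by auto
    qed (use inner in \<open>auto simp: inner_edges_iff\<close>)
    also have "\<dots> \<longleftrightarrow> e \<in> ?R" using inner by auto
    finally show ?thesis .
  next
    case other
    then show ?thesis using chain_edge_in by (auto simp: inner_edges_iff)
  qed
qed

lemma closure_edges: "gedges G = ring \<union> Some ` (\<Union>i\<in>{1..k}. inner_edges i)"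
  unfolding chain_closure_def mgraph.simps closure_old_edges ring_def image_Un by auto

lemma block_verts: "gverts (H i) = Bs i"
  unfolding chain_block_def by simp

lemma block_edges: "gedges (H i) = insert None (Some ` inner_edges i)"
  unfolding chain_block_def inner_edges_def by simp

lemma closure_ends [simp]: "gends G (Some e) = gends C e" "gends G None = (xs 1, ys k)"
  unfolding chain_closure_def by simp_all

lemma block_ends [simp]: "gends (H i) (Some e) = gends C e" "gends (H i) None = (xs i, ys i)"
  unfolding chain_block_def by simp_all

lemma inner_edges_disjoint: "i \<le> k+1 \<Longrightarrow> j \<le> k+1 \<Longrightarrow> e \<in> inner_edges i \<Longrightarrow> e \<in> inner_edges j \<Longrightarrow> i = j"
  using block_unique unfolding inner_edges_iff by blast

lemma finite_block: "i \<le> k+1 \<Longrightarrow> finite (Bs i)"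
  using block_subset wf_C unfolding wf_graph_def by (auto intro: finite_subset)

lemma wf_block: "i \<in> {1..k} \<Longrightarrow> wf_graph (H i)"
proof -
  assume i: "i \<in> {1..k}"
  have "inner_edges i \<subseteq> gedges C" by (auto simp: inner_edges_iff)
  then have "finite (inner_edges i)" using wf_C unfolding wf_graph_def by (auto intro: finite_subset)
  then show ?thesis
    using finite_block[of i] i ends_in_block[OF i]
    unfolding wf_graph_def block_verts block_edges by (auto simp: inner_edges_iff)
qed

lemma wf_closure: "wf_graph G"
proof -
  have "finite (gverts G)" "finite (gedges G)"
    using wf_C unfolding chain_closure_def wf_graph_def by auto
  moreover have "fst (gends G f) \<in> gverts G \<and> snd (gends G f) \<in> gverts G" if "f \<in> gedges G" for f
  proof (cases f)
    case None then show ?thesis using ends_in_block[of 1] ends_in_block[of k] k_pos by (auto simp: closure_verts)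
  next
    case (Some e)
    with that show ?thesis using wf_C unfolding wf_graph_def chain_closure_def by auto
  qed
  ultimately show ?thesis unfolding wf_graph_def by blast
qed

lemma closure_eq_block_if_single:
  assumes "k = 1"
  shows "G = H 1"
proof -
  have "gverts G = gverts (H 1)" using assms unfolding closure_verts block_verts by simp
  moreover have "gedges G = gedges (H 1)" using assms unfolding closure_edges block_edges ring_def by auto
  moreover have "gends G f = gends (H 1) f" for f
    using assms by (cases f) (simp_all add: chain_closure_def chain_block_def)
  ultimately show ?thesis by (intro mgraph.equality) (auto simp: chain_closure_def chain_block_def)
qed

lemma card_UN_blocks:
  assumes "\<And>i. i \<in> {1..k} \<Longrightarrow> A i \<subseteq> Bs i"
  shows "card (\<Union>i\<in>{1..k}. A i) = (\<Sum>i\<in>{1..k}. card (A i))"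
proof (rule card_UN_disjoint)
  show "\<forall>i\<in>{1..k}. finite (A i)"
    by (intro ballI finite_subset[OF assms finite_block]) auto
  show "\<forall>i\<in>{1..k}. \<forall>j\<in>{1..k}. i \<noteq> j \<longrightarrow> A i \<inter> A j = {}"
  proof (intro ballI impI)
    fix i j assume "i \<in> {1..k}" "j \<in> {1..k}" "i \<noteq> j"
    then show "A i \<inter> A j = {}" using assms[of i] assms[of j] block_unique[of i j] by auto
  qed
qed simp

end

section \<open>Even covers of the closure\<close>

locale long_chain = nontrivial_chain +
  assumes k_ge_2: "2 \<le> k"
begin

definition left_edge where
  "left_edge i = (if i = 1 then None else Some (es (i-1)))"

definition right_edge where
  "right_edge i = (if i = k then None else Some (es i))"

lemma ring_disjoint_inner: "ring \<inter> Some ` inner_edges i = {}"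
  unfolding ring_def by (auto simp: inner_edges_iff)

lemma ring_subset_closure: "ring \<subseteq> gedges G"
  using closure_edges by auto

lemma block_edges_subset_closure: "i \<in> {1..k} \<Longrightarrow> gedges (H i) \<subseteq> gedges G"
proof -
  assume "i \<in> {1..k}"
  then have "None \<in> gedges G" "Some ` inner_edges i \<subseteq> gedges G"
    unfolding closure_edges ring_def by blast+
  then show ?thesis unfolding block_edges by blast
qed

lemma chain_edge_incidence:
  assumes j: "j \<le> k" and i: "i \<in> {1..k}" and v: "v \<in> Bs i"
  shows "incidence G (Some (es j)) v
    = (if j = i then (if ys i = v then 1 else 0) else 0)
      + (if j = i - 1 then (if xs i = v then 1 else 0) else 0)"
proof -
  have ends: "ys j \<in> Bs j" "xs (Suc j) \<in> Bs (Suc j)"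
    and gends: "gends C (es j) = (ys j, xs (Suc j)) \<or> gends C (es j) = (xs (Suc j), ys j)"
    using chain_edge_ends[OF j] by blast+
  have yj: "j = i" if "ys j = v"
    using block_unique[of j i v] ends that i j v by simp
  have xj: "Suc j = i" if "xs (Suc j) = v"
    using block_unique[of "Suc j" i v] ends that i j v by simp
  have ys: "(if ys j = v then 1 else 0) = (if j = i then (if ys i = v then 1 else 0) else 0::nat)"
    using yj by (cases "ys j = v") auto
  have xs: "(if xs (Suc j) = v then 1 else 0) = (if j = i - 1 then (if xs i = v then 1 else 0) else 0::nat)"
    using i xj by (cases "xs (Suc j) = v") auto
  from gends have "incidence G (Some (es j)) v
      = (if ys j = v then 1 else 0) + (if xs (Suc j) = v then 1 else 0)"
    unfolding incidence_def by (elim disjE) simp_all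
  then show ?thesis unfolding ys xs .
qed

lemma ring_incidence_sum:
  assumes i: "i \<in> {1..k}" and v: "v \<in> Bs i"
  shows "(\<Sum>f\<in>ring. incidence G f v) = incidence (H i) None v"
proof -
  have ring_eq: "ring = insert None ((\<lambda>j. Some (es j)) ` {1..k-1})"
    unfolding ring_def by auto
  have "inj_on (\<lambda>j. Some (es j)) {1..k-1}"
    by (rule inj_onI) (use chain_edge_inj in auto)
  then have "(\<Sum>f\<in>ring. incidence G f v) = incidence G None v + (\<Sum>j\<in>{1..k-1}. incidence G (Some (es j)) v)"
    unfolding ring_eq by (subst sum.insert) (auto simp: sum.reindex)
  also have "(\<Sum>j\<in>{1..k-1}. incidence G (Some (es j)) v)
      = (\<Sum>j\<in>{1..k-1}. (if j = i then (if ys i = v then 1 else 0) else 0)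
                       + (if j = i - 1 then (if xs i = v then 1 else 0) else 0))"
    using chain_edge_incidence[OF _ i v] by (intro sum.cong) auto
  also have "\<dots> = (if i \<in> {1..k-1} then (if ys i = v then 1 else 0) else 0)
        + (if i - 1 \<in> {1..k-1} then (if xs i = v then 1 else 0) else 0)"
    by (simp add: sum.distrib)
  also have "incidence G None v
      = (if i = 1 then (if xs i = v then 1 else 0) else 0) + (if i = k then (if ys i = v then 1 else 0) else 0)"
    using block_unique[of 1 i v] block_unique[of k i v] ends_in_block[of 1] ends_in_block[of k] i v k_ge_2
    unfolding incidence_def by auto
  finally have "(\<Sum>f\<in>ring. incidence G f v)
      = (if i = 1 then (if xs i = v then 1 else 0) else 0) + (if i = k then (if ys i = v then 1 else 0) else 0)
        + ((if i \<in> {1..k-1} then (if ys i = v then 1 else 0) else 0)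
           + (if i - 1 \<in> {1..k-1} then (if xs i = v then 1 else 0) else 0))" .
  moreover have "incidence (H i) None v = (if xs i = v then 1 else 0) + (if ys i = v then 1 else 0)"
    unfolding incidence_def by simp
  ultimately show ?thesis using i k_ge_2 by auto
qed

lemma deg_in_closure_eq_block:
  assumes FE: "F \<subseteq> gedges G" and ring_cases: "F \<inter> ring = {} \<or> ring \<subseteq> F"
    and i: "i \<in> {1..k}" and v: "v \<in> Bs i"
  shows "deg_in G F v = deg_in (H i) (F \<inter> gedges (H i)) v"
proof -
  have finF: "finite F" using FE wf_closure unfolding wf_graph_def by (auto intro: finite_subset)
  have far: "incidence G f v = 0" if "f \<in> F - ring - Some ` inner_edges i" for f
  proof -
    from that FE have "f \<in> Some ` (\<Union>j\<in>{1..k}. inner_edges j)" "f \<notin> Some ` inner_edges i"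
      unfolding closure_edges by auto
    then obtain j e where je: "j \<in> {1..k}" "e \<in> inner_edges j" "f = Some e" "j \<noteq> i"
      by blast
    then show ?thesis using block_unique[of i j v] i v unfolding incidence_def inner_edges_iff by auto
  qed
  have "deg_in G F v = (\<Sum>f\<in>F \<inter> ring. incidence G f v) + (\<Sum>f\<in>F - ring. incidence G f v)"
    using finF by (simp add: deg_in_eq_sum_incidence sum.Int_Diff)
  also have "(\<Sum>f\<in>F - ring. incidence G f v) = (\<Sum>f\<in>F \<inter> Some ` inner_edges i. incidence G f v)"
    using finF ring_disjoint_inner[of i] far by (intro sum.mono_neutral_right) auto
  also have "(\<Sum>f\<in>F \<inter> ring. incidence G f v) = (\<Sum>f\<in>F \<inter> {None}. incidence (H i) f v)"
    using ring_cases
  proof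
    assume "F \<inter> ring = {}"
    then show ?thesis unfolding ring_def by auto
  next
    assume "ring \<subseteq> F"
    then have "F \<inter> ring = ring" "F \<inter> {None} = {None}" unfolding ring_def by auto
    then show ?thesis using ring_incidence_sum[OF i v] by simp
  qed
  also have "(\<Sum>f\<in>F \<inter> Some ` inner_edges i. incidence G f v)
      = (\<Sum>f\<in>F \<inter> Some ` inner_edges i. incidence (H i) f v)"
    by (rule sum.cong) (auto simp: incidence_def)
  also have "(\<Sum>f\<in>F \<inter> {None}. incidence (H i) f v) + \<dots>
      = (\<Sum>f\<in>(F \<inter> {None}) \<union> (F \<inter> Some ` inner_edges i). incidence (H i) f v)"
    using finF by (intro sum.union_disjoint[symmetric]) auto
  also have "(F \<inter> {None}) \<union> (F \<inter> Some ` inner_edges i) = F \<inter> gedges (H i)"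
    unfolding block_edges by auto
  also have "(\<Sum>f\<in>F \<inter> gedges (H i). incidence (H i) f v) = deg_in (H i) (F \<inter> gedges (H i)) v"
    using finF by (simp add: deg_in_eq_sum_incidence)
  finally show ?thesis .
qed

lemma even_cover_closure_iff:
  assumes "F \<subseteq> gedges G" and "F \<inter> ring = {} \<or> ring \<subseteq> F"
  shows "even_cover G F \<longleftrightarrow> (\<forall>i\<in>{1..k}. even_cover (H i) (F \<inter> gedges (H i)))"
  using deg_in_closure_eq_block[OF assms] assms(1)
  unfolding even_cover_def closure_verts block_verts by auto

lemma left_edge_ne_right_edge: "i \<in> {1..k} \<Longrightarrow> left_edge i \<noteq> right_edge i"
proof -
  assume i: "i \<in> {1..k}"
  then have "es (i-1) \<noteq> es i" using chain_edge_inj[of "i-1" i] by force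
  then show ?thesis using k_ge_2 unfolding left_edge_def right_edge_def by auto
qed

lemma crosses_block_iff:
  assumes i: "i \<in> {1..k}" and f: "f \<in> gedges G"
  shows "(fst (gends G f) \<in> Bs i) \<noteq> (snd (gends G f) \<in> Bs i) \<longleftrightarrow> f \<in> {left_edge i, right_edge i}"
proof -
  have ik: "i \<le> k+1" using i by auto
  from f consider "f = None" | j where "j \<in> {1..k-1}" "f = Some (es j)"
    | j e where "j \<in> {1..k}" "e \<in> inner_edges j" "f = Some e"
    unfolding closure_edges ring_def by auto
  then show ?thesis
  proof cases
    case 1
    have "xs 1 \<in> Bs i \<longleftrightarrow> i = 1" "ys k \<in> Bs i \<longleftrightarrow> i = k"
      using in_block_iff[of 1 "xs 1" i] in_block_iff[of k "ys k" i] ends_in_block[of 1] ends_in_block[of k]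
        k_ge_2 ik by auto
    moreover have "None \<in> {left_edge i, right_edge i} \<longleftrightarrow> i = 1 \<or> i = k"
      unfolding left_edge_def right_edge_def by auto
    ultimately show ?thesis using 1 k_ge_2 by auto
  next
    case 2
    then have j: "j \<le> k" by auto
    have "ys j \<in> Bs i \<longleftrightarrow> i = j" "xs (Suc j) \<in> Bs i \<longleftrightarrow> i = Suc j"
      using in_block_iff[of j "ys j" i] in_block_iff[of "Suc j" "xs (Suc j)" i] chain_edge_ends[OF j] j ik
      by auto
    then have "(fst (gends G f) \<in> Bs i) \<noteq> (snd (gends G f) \<in> Bs i) \<longleftrightarrow> i = j \<or> i = Suc j"
      using chain_edge_ends[OF j] 2 by auto
    moreover have "f \<in> {left_edge i, right_edge i} \<longleftrightarrow> i = j \<or> i = Suc j"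
    proof
      assume "f \<in> {left_edge i, right_edge i}"
      then have "(i \<noteq> 1 \<and> es j = es (i-1)) \<or> (i \<noteq> k \<and> es j = es i)"
        using 2 unfolding left_edge_def right_edge_def by (auto split: if_splits)
      then show "i = j \<or> i = Suc j" using chain_edge_inj[of j "i-1"] chain_edge_inj[of j i] j i by auto
    qed (use 2 in \<open>auto simp: left_edge_def right_edge_def\<close>)
    ultimately show ?thesis by simp
  next
    case 3
    then have "fst (gends C e) \<in> Bs j" "snd (gends C e) \<in> Bs j" "e \<notin> cut_edges"
      by (auto simp: inner_edges_iff)
    moreover have "f \<notin> {left_edge i, right_edge i}"
      using 3 i \<open>e \<notin> cut_edges\<close> unfolding left_edge_def right_edge_def by auto
    ultimately show ?thesis
      using 3 in_block_iff[of j "fst (gends C e)" i] in_block_iff[of j "snd (gends C e)" i] ik by auto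
  qed
qed

text \<open>The parity argument: a block is left by exactly the two ring edges at its ends, so an
  even cover uses both of them or neither.\<close>

lemma even_cover_left_iff_right:
  assumes ec: "even_cover G F" and i: "i \<in> {1..k}"
  shows "left_edge i \<in> F \<longleftrightarrow> right_edge i \<in> F"
proof -
  have FE: "F \<subseteq> gedges G" and ev: "\<forall>v\<in>gverts G. even (deg_in G F v)"
    using ec unfolding even_cover_def by auto
  have "{f\<in>F. (fst (gends G f) \<in> Bs i) \<noteq> (snd (gends G f) \<in> Bs i)} = F \<inter> {left_edge i, right_edge i}"
    using crosses_block_iff[OF i] FE by blast
  moreover have "Bs i \<subseteq> gverts G" unfolding closure_verts using i by auto
  ultimately have "even (card (F \<inter> {left_edge i, right_edge i}))"
    using even_card_crossing_edges[OF wf_closure FE ev, of "Bs i"] by simp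
  then show ?thesis using left_edge_ne_right_edge[OF i] by (cases "left_edge i \<in> F"; cases "right_edge i \<in> F") auto
qed

lemma even_cover_ring_edge_iff:
  assumes ec: "even_cover G F"
  shows "j \<in> {1..k-1} \<Longrightarrow> Some (es j) \<in> F \<longleftrightarrow> None \<in> F"
proof (induction j)
  case (Suc j)
  show ?case
  proof (cases "j = 0")
    case True
    then have "left_edge 1 = None" "right_edge 1 = Some (es (Suc j))"
      using k_ge_2 unfolding left_edge_def right_edge_def by auto
    then show ?thesis using even_cover_left_iff_right[OF ec, of 1] k_ge_2 by auto
  next
    case False
    then have "left_edge (Suc j) = Some (es j)" "right_edge (Suc j) = Some (es (Suc j))"
      using Suc.prems unfolding left_edge_def right_edge_def by auto
    then show ?thesis using even_cover_left_iff_right[OF ec, of "Suc j"] Suc False by auto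
  qed
qed simp

lemma even_cover_ring_cases:
  assumes ec: "even_cover G F"
  shows "F \<inter> ring = {} \<or> ring \<subseteq> F"
proof (cases "None \<in> F")
  case True
  then have "ring \<subseteq> F" using even_cover_ring_edge_iff[OF ec] unfolding ring_def by auto
  then show ?thesis ..
next
  case False
  then have "F \<inter> ring = {}" using even_cover_ring_edge_iff[OF ec] unfolding ring_def by auto
  then show ?thesis ..
qed

lemma ring_edge_end:
  assumes f: "f \<in> ring" and w: "w = fst (gends G f) \<or> w = snd (gends G f)"
  shows "\<exists>j\<in>{1..k}. w = xs j \<or> w = ys j"
proof -
  from f consider "f = None" | j where "j \<in> {1..k-1}" "f = Some (es j)" unfolding ring_def by auto
  then show ?thesis
  proof cases
    case 1 then show ?thesis using w k_ge_2 by auto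
  next
    case 2
    then have "w = ys j \<or> w = xs (Suc j)" using chain_edge_ends[of j] w by force
    moreover have "j \<in> {1..k}" "Suc j \<in> {1..k}" using 2 by auto
    ultimately show ?thesis by blast
  qed
qed

end

locale closure_cover = long_chain +
  fixes F assumes cover: "even_cover G F"
begin

abbreviation "part i \<equiv> F \<inter> gedges (H i)"
abbreviation "bcomp i \<equiv> comp_of (H i) (part i)"
abbreviation "active i \<equiv> {v\<in>Bs i. deg_in (H i) (part i) v \<noteq> 0}"

lemma cover_subset: "F \<subseteq> gedges G"
  using cover unfolding even_cover_def by auto

lemma finite_cover: "finite F"
  using cover_subset wf_closure unfolding wf_graph_def by (auto intro: finite_subset)

lemma cover_ring_cases: "F \<inter> ring = {} \<or> ring \<subseteq> F"
  by (rule even_cover_ring_cases[OF cover])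

lemma part_even_cover: "i \<in> {1..k} \<Longrightarrow> even_cover (H i) (part i)"
  using even_cover_closure_iff[OF cover_subset cover_ring_cases] cover by blast

lemma deg_in_part: "i \<in> {1..k} \<Longrightarrow> v \<in> Bs i \<Longrightarrow> deg_in G F v = deg_in (H i) (part i) v"
  by (rule deg_in_closure_eq_block[OF cover_subset cover_ring_cases])

lemma num_isolated_closure: "num_isolated G F = (\<Sum>i\<in>{1..k}. num_isolated (H i) (part i))"
proof -
  have "{v\<in>gverts G. deg_in G F v = 0} = (\<Union>i\<in>{1..k}. {v\<in>Bs i. deg_in (H i) (part i) v = 0})"
    unfolding closure_verts using deg_in_part by auto
  then show ?thesis unfolding num_isolated_def block_verts
    using card_UN_blocks[of "\<lambda>i. {v\<in>Bs i. deg_in (H i) (part i) v = 0}"] by simp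
qed

lemma active_closure: "{v\<in>gverts G. deg_in G F v \<noteq> 0} = (\<Union>i\<in>{1..k}. active i)"
  unfolding closure_verts using deg_in_part by auto

lemma bcomp_subset: "bcomp i u \<subseteq> Bs i"
  using comp_of_subset[of "H i"] unfolding block_verts .

lemma bcomp_self: "a \<in> Bs i \<Longrightarrow> a \<in> bcomp i a"
  using comp_of_self[of a "H i"] unfolding block_verts .

lemma num_cycles_part: "i \<in> {1..k} \<Longrightarrow> num_cycles (H i) (part i) = card (bcomp i ` active i)"
  using num_cycles_eq_card_comp_of[OF wf_block, of i "part i"] unfolding block_verts by auto

lemma card_UN_bcomp_images:
  assumes "\<And>i. i \<in> {1..k} \<Longrightarrow> A i \<subseteq> Bs i"
  shows "card (\<Union>i\<in>{1..k}. bcomp i ` A i) = (\<Sum>i\<in>{1..k}. card (bcomp i ` A i))"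
proof (rule card_UN_disjoint)
  show "\<forall>i\<in>{1..k}. finite (bcomp i ` A i)"
    by (intro ballI finite_imageI finite_subset[OF assms finite_block]) auto
  show "\<forall>i\<in>{1..k}. \<forall>j\<in>{1..k}. i \<noteq> j \<longrightarrow> bcomp i ` A i \<inter> bcomp j ` A j = {}"
  proof (intro ballI impI)
    fix i j assume ij: "i \<in> {1..k}" "j \<in> {1..k}" "i \<noteq> j"
    show "bcomp i ` A i \<inter> bcomp j ` A j = {}"
    proof (rule ccontr)
      assume "bcomp i ` A i \<inter> bcomp j ` A j \<noteq> {}"
      then obtain a b where ab: "a \<in> A i" "bcomp i a = bcomp j b" by auto
      then have "a \<in> Bs i" "a \<in> Bs j"
        using assms[OF ij(1)] bcomp_self[of a i] bcomp_subset[of j b] by auto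
      then show False using block_unique[of i j a] ij by auto
    qed
  qed
qed simp

lemma reach_block_Some_imp_closure:
  assumes "None \<notin> F'" "F' \<subseteq> F" "reach (H i) F' u v"
  shows "reach G F u v"
proof (rule reach_transfer[OF _ assms(3)])
  fix f assume f: "f \<in> F'" "f \<in> gedges (H i)"
  then obtain e where "f = Some e" using assms(1) by (cases f) auto
  moreover have "f \<in> F" "f \<in> gedges G" using f assms(2) cover_subset by auto
  ultimately show "reach G F (fst (gends (H i) f)) (snd (gends (H i) f))"
    using reach_edge_ends[of f F G] by simp
qed

text \<open>If the cover uses e_C, then the new edge of every chain-block is simulated in the closure by
  the rest of its cycle, which exists because cycles have no bridges.\<close>

lemma reach_block_imp_closure:
  assumes i: "i \<in> {1..k}" and r: "reach (H i) (part i) u v"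
  shows "reach G F u v"
proof (rule reach_transfer[OF _ r])
  fix f assume f: "f \<in> part i" "f \<in> gedges (H i)"
  show "reach G F (fst (gends (H i) f)) (snd (gends (H i) f))"
  proof (cases f)
    case None
    have "reach (H i) (part i - {None}) (fst (gends (H i) None)) (snd (gends (H i) None))"
      using even_cover_no_bridge[OF wf_block[OF i] part_even_cover[OF i]] f None by blast
    then show ?thesis using None reach_block_Some_imp_closure[of "part i - {None}" i] by auto
  next
    case (Some e)
    then show ?thesis using f cover_subset reach_edge_ends[of f F G] by auto
  qed
qed

lemma non_ring_step:
  assumes f: "f \<in> F" "f \<notin> ring" and ends: "gends G f = (w, z) \<or> gends G f = (z, w)"
    and i: "i \<in> {1..k}" and w: "w \<in> Bs i"
  shows "z \<in> Bs i \<and> reach (H i) (part i) w z"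
proof -
  obtain j e where je: "j \<in> {1..k}" "e \<in> inner_edges j" "f = Some e"
    using f cover_subset closure_edges by auto
  then have "w \<in> Bs j" "z \<in> Bs j" using ends by (auto simp: inner_edges_iff)
  then have "j = i" using block_unique[of i j w] i je(1) w by auto
  then have "f \<in> part i" "f \<in> gedges (H i)" using je f unfolding block_edges by auto
  then show ?thesis using reach_edge[of f "part i" "H i" w z] ends je \<open>z \<in> Bs j\<close> \<open>j = i\<close> by simp
qed

definition ring_comp :: "nat \<Rightarrow> 'a set" where
  "ring_comp i = bcomp i (xs i)"

definition ring_cycle :: "'a set" where
  "ring_cycle = (\<Union>i\<in>{1..k}. ring_comp i)"

lemma ring_comp_iff: "w \<in> ring_comp j \<longleftrightarrow> w \<in> Bs j \<and> reach (H j) (part j) (xs j) w"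
  unfolding ring_comp_def comp_of_def block_verts by simp

lemma ring_comp_subset: "ring_comp i \<subseteq> Bs i"
  unfolding ring_comp_def by (rule bcomp_subset)

lemma ends_in_ring_comp:
  assumes "None \<in> F" "i \<in> {1..k}"
  shows "xs i \<in> ring_comp i \<and> ys i \<in> ring_comp i"
proof -
  have "reach (H i) (part i) (xs i) (ys i)"
    using reach_edge[of None "part i" "H i" "xs i" "ys i"] assms unfolding block_edges by simp
  then show ?thesis using ends_in_block[OF assms(2)] unfolding ring_comp_iff by auto
qed

lemma ring_edge_end_in_ring_comp:
  assumes f: "f \<in> F" "f \<in> ring" and w: "w = fst (gends G f) \<or> w = snd (gends G f)"
    and i: "i \<in> {1..k}" "w \<in> Bs i"
  shows "None \<in> F \<and> w \<in> ring_comp i"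
proof -
  have None: "None \<in> F" using cover_ring_cases f unfolding ring_def by auto
  obtain j where j: "j \<in> {1..k}" "w = xs j \<or> w = ys j" using ring_edge_end[OF f(2) w] by blast
  then have "j = i" using block_unique[of i j w] ends_in_block[OF j(1)] i by auto
  then show ?thesis using None ends_in_ring_comp[OF None j(1)] j by auto
qed

lemma reach_closure_cases:
  assumes i: "i \<in> {1..k}" and u: "u \<in> Bs i" and r: "reach G F u v"
  shows "(v \<in> Bs i \<and> reach (H i) (part i) u v)
    \<or> (None \<in> F \<and> u \<in> ring_comp i \<and> (\<exists>j\<in>{1..k}. v \<in> ring_comp j))"
  using r unfolding reach_def[of G]
proof (induction rule: rtranclp_induct)
  case base then show ?case using u by simp
next
  case (step w z)
  then obtain f where f: "f \<in> F" "f \<in> gedges G" "gends G f = (w, z) \<or> gends G f = (z, w)" by blast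
  show ?case
  proof (cases "f \<in> ring")
    case True
    obtain j where j: "j \<in> {1..k}" "z \<in> Bs j"
      using ring_edge_end[OF True, of z] f(3) ends_in_block by auto
    then have z: "None \<in> F \<and> z \<in> ring_comp j"
      using ring_edge_end_in_ring_comp[OF f(1) True _ j] f(3) by auto
    have "u \<in> ring_comp i"
      using step.IH
    proof
      assume w: "w \<in> Bs i \<and> reach (H i) (part i) u w"
      then have "w \<in> ring_comp i" using ring_edge_end_in_ring_comp[OF f(1) True _ i] f(3) by auto
      then show ?thesis using w u unfolding ring_comp_iff by (blast intro: reach_trans reach_sym)
    qed simp
    then show ?thesis using z j(1) by blast
  next
    case False
    show ?thesis
      using step.IH
    proof
      assume w: "w \<in> Bs i \<and> reach (H i) (part i) u w"
      then show ?thesis using non_ring_step[OF f(1) False f(3) i] by (blast intro: reach_trans)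
    next
      assume "None \<in> F \<and> u \<in> ring_comp i \<and> (\<exists>j\<in>{1..k}. w \<in> ring_comp j)"
      then obtain j where j: "j \<in> {1..k}" "w \<in> ring_comp j" and rest: "None \<in> F" "u \<in> ring_comp i"
        by blast
      then have "z \<in> Bs j \<and> reach (H j) (part j) w z"
        using non_ring_step[OF f(1) False f(3) j(1)] ring_comp_subset by blast
      then have "z \<in> ring_comp j" using j(2) unfolding ring_comp_iff by (blast intro: reach_trans)
      then show ?thesis using rest j(1) by blast
    qed
  qed
qed

lemma reach_along_ring:
  assumes None: "None \<in> F"
  shows "i \<in> {1..k} \<Longrightarrow> reach G F (xs 1) (xs i)"
proof (induction i)
  case (Suc j)
  show ?case
  proof (cases "j = 0")
    case False
    then have j: "j \<in> {1..k}" "j \<in> {1..k-1}" using Suc.prems by auto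
    have "reach (H j) (part j) (xs j) (ys j)"
      using ends_in_ring_comp[OF None j(1)] unfolding ring_comp_iff by simp
    then have "reach G F (xs j) (ys j)" by (rule reach_block_imp_closure[OF j(1)])
    moreover have "Some (es j) \<in> F" "Some (es j) \<in> gedges G"
      using None cover_ring_cases ring_subset_closure j(2) unfolding ring_def by auto
    then have "reach G F (ys j) (xs (Suc j))"
      using chain_edge_ends[of j] j(1) by (intro reach_edge) auto
    ultimately show ?thesis using Suc.IH j(1) by (blast intro: reach_trans)
  qed simp
qed simp

lemma comp_of_closure_ring:
  assumes None: "None \<in> F" and i: "i \<in> {1..k}" and u: "u \<in> ring_comp i"
  shows "comp_of G F u = ring_cycle"
proof (rule set_eqI, rule iffI)
  have ui: "u \<in> Bs i" using u ring_comp_subset by auto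
  fix v assume "v \<in> comp_of G F u"
  then have "reach G F u v" unfolding comp_of_def by auto
  from reach_closure_cases[OF i ui this] show "v \<in> ring_cycle"
  proof
    assume "v \<in> Bs i \<and> reach (H i) (part i) u v"
    then have "v \<in> ring_comp i" using u unfolding ring_comp_iff by (blast intro: reach_trans)
    then show ?thesis unfolding ring_cycle_def using i by blast
  qed (auto simp: ring_cycle_def)
next
  fix v assume "v \<in> ring_cycle"
  then obtain j where j: "j \<in> {1..k}" "v \<in> ring_comp j" unfolding ring_cycle_def by auto
  have "reach G F (xs i) u" "reach G F (xs j) v"
    using u j reach_block_imp_closure i unfolding ring_comp_iff by blast+
  moreover have "reach G F (xs i) (xs j)"
    using reach_along_ring[OF None i] reach_along_ring[OF None j(1)] by (blast intro: reach_sym reach_trans)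
  ultimately have "reach G F u v" by (blast intro: reach_sym reach_trans)
  moreover have "v \<in> gverts G" using j ring_comp_subset unfolding closure_verts by blast
  ultimately show "v \<in> comp_of G F u" unfolding comp_of_def by simp
qed

lemma comp_of_closure_block:
  assumes i: "i \<in> {1..k}" and u: "u \<in> Bs i" and off_ring: "None \<in> F \<Longrightarrow> u \<notin> ring_comp i"
  shows "comp_of G F u = bcomp i u"
proof (rule set_eqI, rule iffI)
  fix v assume "v \<in> comp_of G F u"
  then have "reach G F u v" unfolding comp_of_def by auto
  then show "v \<in> bcomp i u"
    using reach_closure_cases[OF i u] off_ring unfolding comp_of_def block_verts by auto
next
  fix v assume v: "v \<in> bcomp i u"
  then have "reach G F u v" using reach_block_imp_closure[OF i] unfolding comp_of_def by auto
  moreover have "v \<in> gverts G" using v bcomp_subset i unfolding closure_verts by blast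
  ultimately show "v \<in> comp_of G F u" unfolding comp_of_def by simp
qed

lemma num_cycles_closure_off_ring:
  assumes None: "None \<notin> F"
  shows "num_cycles G F = (\<Sum>i\<in>{1..k}. num_cycles (H i) (part i))"
proof -
  have "num_cycles G F = card (comp_of G F ` (\<Union>i\<in>{1..k}. active i))"
    using num_cycles_eq_card_comp_of[OF wf_closure cover_subset] active_closure by simp
  also have "comp_of G F ` (\<Union>i\<in>{1..k}. active i) = (\<Union>i\<in>{1..k}. bcomp i ` active i)"
    unfolding image_UN
  proof (rule SUP_cong)
    fix i assume "i \<in> {1..k}"
    then show "comp_of G F ` active i = bcomp i ` active i"
      using comp_of_closure_block None by (intro image_cong) auto
  qed simp
  also have "card \<dots> = (\<Sum>i\<in>{1..k}. card (bcomp i ` active i))"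
    by (rule card_UN_bcomp_images) auto
  finally show ?thesis using num_cycles_part by simp
qed

lemma card_bcomps_through_ring:
  assumes None: "None \<in> F" and i: "i \<in> {1..k}"
  shows "card (bcomp i ` active i) = Suc (card (bcomp i ` (active i - ring_comp i)))"
proof -
  have "deg_in (H i) (part i) (xs i) \<noteq> 0"
    using deg_in_nonzero[of "part i" None "H i"] finite_cover None unfolding block_edges by simp
  then have x: "xs i \<in> active i" using ends_in_block[OF i] by simp
  have "bcomp i ` active i = insert (ring_comp i) (bcomp i ` (active i - ring_comp i))"
  proof (rule set_eqI, rule iffI)
    fix K assume "K \<in> bcomp i ` active i"
    then obtain a where a: "a \<in> active i" "K = bcomp i a" by auto
    show "K \<in> insert (ring_comp i) (bcomp i ` (active i - ring_comp i))"
    proof (cases "a \<in> ring_comp i")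
      case True
      then have "reach (H i) (part i) (xs i) a" unfolding ring_comp_iff by simp
      then have "bcomp i a = ring_comp i" unfolding ring_comp_def by (simp add: comp_of_eq)
      then show ?thesis using a by simp
    next
      case False
      then show ?thesis using a by blast
    qed
  next
    fix K assume "K \<in> insert (ring_comp i) (bcomp i ` (active i - ring_comp i))"
    then show "K \<in> bcomp i ` active i" using x unfolding ring_comp_def by blast
  qed
  moreover have "ring_comp i \<notin> bcomp i ` (active i - ring_comp i)"
  proof
    assume "ring_comp i \<in> bcomp i ` (active i - ring_comp i)"
    then obtain a where "a \<in> active i" "a \<notin> ring_comp i" "ring_comp i = bcomp i a" by blast
    then show False using bcomp_self[of a i] by simp
  qed
  moreover have "finite (bcomp i ` (active i - ring_comp i))"
    using finite_block[of i] i by auto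
  ultimately show ?thesis by simp
qed

lemma comps_closure_through_ring:
  assumes None: "None \<in> F"
  shows "comp_of G F ` (\<Union>i\<in>{1..k}. active i)
    = insert ring_cycle (\<Union>i\<in>{1..k}. bcomp i ` (active i - ring_comp i))"
proof (rule set_eqI, rule iffI)
  fix K assume "K \<in> comp_of G F ` (\<Union>i\<in>{1..k}. active i)"
  then obtain i v where iv: "i \<in> {1..k}" "v \<in> active i" "K = comp_of G F v" by auto
  then show "K \<in> insert ring_cycle (\<Union>i\<in>{1..k}. bcomp i ` (active i - ring_comp i))"
    using comp_of_closure_ring[OF None iv(1)] comp_of_closure_block[OF iv(1)]
    by (cases "v \<in> ring_comp i") auto
next
  fix K assume K: "K \<in> insert ring_cycle (\<Union>i\<in>{1..k}. bcomp i ` (active i - ring_comp i))"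
  have one: "(1::nat) \<in> {1..k}" using k_ge_2 by auto
  have "deg_in (H 1) (part 1) (xs 1) \<noteq> 0"
    using deg_in_nonzero[of "part 1" None "H 1"] finite_cover None unfolding block_edges by simp
  then have "xs 1 \<in> active 1" using ends_in_block[OF one] by simp
  moreover have "comp_of G F (xs 1) = ring_cycle"
    using comp_of_closure_ring[OF None one] ends_in_ring_comp[OF None one] by simp
  ultimately have "ring_cycle \<in> comp_of G F ` (\<Union>i\<in>{1..k}. active i)" using one by blast
  moreover have "bcomp i a \<in> comp_of G F ` (\<Union>i\<in>{1..k}. active i)"
    if "i \<in> {1..k}" "a \<in> active i - ring_comp i" for i a
    using comp_of_closure_block[of i a] that by blast
  ultimately show "K \<in> comp_of G F ` (\<Union>i\<in>{1..k}. active i)" using K by blast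
qed

lemma ring_cycle_not_bcomp: "ring_cycle \<notin> (\<Union>i\<in>{1..k}. bcomp i ` (active i - ring_comp i))"
proof
  assume "ring_cycle \<in> (\<Union>i\<in>{1..k}. bcomp i ` (active i - ring_comp i))"
  then obtain i a where ia: "i \<in> {1..k}" "a \<in> Bs i" "a \<notin> ring_comp i" "ring_cycle = bcomp i a"
    by blast
  then have "a \<in> ring_cycle" using bcomp_self[of a i] by simp
  then obtain j where j: "j \<in> {1..k}" "a \<in> ring_comp j" unfolding ring_cycle_def by blast
  then have "j = i" using block_unique[of i j a] ring_comp_subset[of j] ia(1,2) by auto
  with ia(3) j(2) show False by simp
qed

lemma num_cycles_closure_through_ring:
  assumes None: "None \<in> F"
  shows "num_cycles G F + (k - 1) = (\<Sum>i\<in>{1..k}. num_cycles (H i) (part i))"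
proof -
  have "num_cycles G F = card (insert ring_cycle (\<Union>i\<in>{1..k}. bcomp i ` (active i - ring_comp i)))"
    using num_cycles_eq_card_comp_of[OF wf_closure cover_subset] active_closure
      comps_closure_through_ring[OF None] by simp
  also have "\<dots> = Suc (\<Sum>i\<in>{1..k}. card (bcomp i ` (active i - ring_comp i)))"
    using ring_cycle_not_bcomp card_UN_bcomp_images[of "\<lambda>i. active i - ring_comp i"]
      finite_block by (subst card_insert_disjoint) auto
  finally have "num_cycles G F + (k - 1) = k + (\<Sum>i\<in>{1..k}. card (bcomp i ` (active i - ring_comp i)))"
    using k_ge_2 by simp
  also have "\<dots> = (\<Sum>i\<in>{1..k}. Suc (card (bcomp i ` (active i - ring_comp i))))"
    by (simp add: sum_Suc)
  also have "\<dots> = (\<Sum>i\<in>{1..k}. num_cycles (H i) (part i))"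
    using num_cycles_part card_bcomps_through_ring[OF None] by simp
  finally show ?thesis .
qed

lemma exc_cover_closure:
  "exc_cover G F + (if None \<in> F then 2 * (k - 1) else 0) = (\<Sum>i\<in>{1..k}. exc_cover (H i) (part i))"
proof (cases "None \<in> F")
  case True
  then show ?thesis using num_cycles_closure_through_ring[OF True] num_isolated_closure
    unfolding exc_cover_def by (simp add: sum.distrib sum_distrib_left[symmetric])
next
  case False
  then show ?thesis using num_cycles_closure_off_ring[OF False] num_isolated_closure
    unfolding exc_cover_def by (simp add: sum.distrib sum_distrib_left[symmetric])
qed

end

section \<open>Excess of the closure\<close>

context long_chain
begin

lemma exc_cover_closure_eq_sum:
  assumes "even_cover G F"
  shows "exc_cover G F + (if None \<in> F then 2 * (k - 1) else 0)
    = (\<Sum>i\<in>{1..k}. exc_cover (H i) (F \<inter> gedges (H i)))"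
proof -
  interpret closure_cover C k es Bs xs ys F by unfold_locales (rule assms)
  show ?thesis by (rule exc_cover_closure)
qed

lemma even_cover_part:
  assumes "even_cover G F" "i \<in> {1..k}"
  shows "even_cover (H i) (F \<inter> gedges (H i))"
proof -
  have "F \<subseteq> gedges G" using assms(1) unfolding even_cover_def by simp
  then show ?thesis
    using even_cover_closure_iff[OF _ even_cover_ring_cases[OF assms(1)]] assms by blast
qed

lemma glued_cover_part:
  assumes Fs: "\<And>i. i \<in> {1..k} \<Longrightarrow> even_cover (H i) (Fs i)"
    and b: "\<And>i. i \<in> {1..k} \<Longrightarrow> None \<in> Fs i \<longleftrightarrow> b" and i: "i \<in> {1..k}"
  shows "((\<Union>j\<in>{1..k}. Fs j) \<union> (if b then ring else {})) \<inter> gedges (H i) = Fs i"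
proof (rule set_eqI, rule iffI)
  fix f assume f: "f \<in> ((\<Union>j\<in>{1..k}. Fs j) \<union> (if b then ring else {})) \<inter> gedges (H i)"
  show "f \<in> Fs i"
  proof (cases f)
    case None
    then have "b" using f b by (auto split: if_splits)
    then show ?thesis using b[OF i] None by simp
  next
    case (Some e)
    then have e: "e \<in> inner_edges i" using f unfolding block_edges by auto
    then have "f \<notin> ring" using Some ring_disjoint_inner[of i] by auto
    then obtain j where j: "j \<in> {1..k}" "f \<in> Fs j" using f by (auto split: if_splits)
    then have "e \<in> inner_edges j" using Fs[OF j(1)] Some unfolding even_cover_def block_edges by auto
    then have "j = i" using inner_edges_disjoint[of i j e] e i j by auto
    then show ?thesis using j by simp
  qed
next
  fix f assume "f \<in> Fs i"
  then show "f \<in> ((\<Union>j\<in>{1..k}. Fs j) \<union> (if b then ring else {})) \<inter> gedges (H i)"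
    using i Fs[OF i] unfolding even_cover_def by auto
qed

lemma glue_block_covers:
  assumes Fs: "\<And>i. i \<in> {1..k} \<Longrightarrow> even_cover (H i) (Fs i)"
    and b: "\<And>i. i \<in> {1..k} \<Longrightarrow> None \<in> Fs i \<longleftrightarrow> b"
  defines "F \<equiv> (\<Union>i\<in>{1..k}. Fs i) \<union> (if b then ring else {})"
  shows "even_cover G F" and "None \<in> F \<longleftrightarrow> b" and "\<And>i. i \<in> {1..k} \<Longrightarrow> F \<inter> gedges (H i) = Fs i"
proof -
  show part: "F \<inter> gedges (H i) = Fs i" if "i \<in> {1..k}" for i
    unfolding F_def by (rule glued_cover_part[OF Fs b that])
  show None: "None \<in> F \<longleftrightarrow> b"
    using b unfolding F_def ring_def by (cases b) auto
  have "(\<Union>i\<in>{1..k}. Fs i) \<subseteq> gedges G"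
  proof (rule UN_least)
    fix i assume "i \<in> {1..k}"
    then show "Fs i \<subseteq> gedges G"
      using Fs block_edges_subset_closure unfolding even_cover_def by blast
  qed
  then have FE: "F \<subseteq> gedges G" using ring_subset_closure unfolding F_def by auto
  have "F \<inter> ring = {} \<or> ring \<subseteq> F"
  proof (cases b)
    case False
    have "Fs i \<inter> ring \<subseteq> {None}" if "i \<in> {1..k}" for i
      using Fs[OF that] ring_disjoint_inner[of i] unfolding even_cover_def block_edges by auto
    then have "(\<Union>i\<in>{1..k}. Fs i \<inter> ring) \<subseteq> {None}" by (intro UN_least)
    moreover have "F \<inter> ring = (\<Union>i\<in>{1..k}. Fs i \<inter> ring)" using False unfolding F_def by auto
    ultimately show ?thesis using None False by auto
  qed (simp add: F_def)
  then show "even_cover G F" using even_cover_closure_iff[OF FE] part Fs by simp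
qed

lemma vertex_weight_closure: "vertex_weight G = (\<Sum>i\<in>{1..k}. vertex_weight (H i))"
proof -
  have "degree G v = degree (H i) v" if "i \<in> {1..k}" "v \<in> Bs i" for i v
  proof -
    have "gedges G \<inter> gedges (H i) = gedges (H i)" using block_edges_subset_closure[OF that(1)] by auto
    then show ?thesis
      using deg_in_closure_eq_block[of "gedges G"] ring_subset_closure that unfolding degree_def by simp
  qed
  then have "{v\<in>gverts G. degree G v = 2} = (\<Union>i\<in>{1..k}. {v\<in>Bs i. degree (H i) v = 2})"
    unfolding closure_verts by auto
  then have "n_two G = (\<Sum>i\<in>{1..k}. n_two (H i))"
    unfolding n_two_def block_verts using card_UN_blocks[of "\<lambda>i. {v\<in>Bs i. degree (H i) v = 2}"] by simp
  moreover have "n_verts G = (\<Sum>i\<in>{1..k}. n_verts (H i))"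
    unfolding n_verts_def closure_verts block_verts using card_UN_blocks[of Bs] by simp
  ultimately show ?thesis
    unfolding vertex_weight_def by (simp add: sum.distrib sum_divide_distrib[symmetric])
qed

lemma exc_cover_closure_lower_bound:
  assumes F: "even_cover G F"
    and m: "\<And>i F'. i \<in> {1..k} \<Longrightarrow> even_cover (H i) F' \<Longrightarrow> (None \<in> F' \<longleftrightarrow> None \<in> F)
      \<Longrightarrow> m i \<le> exc_cover (H i) F'"
  shows "(\<Sum>i\<in>{1..k}. m i) \<le> exc_cover G F + (if None \<in> F then 2 * (k - 1) else 0)"
proof -
  have "(\<Sum>i\<in>{1..k}. m i) \<le> (\<Sum>i\<in>{1..k}. exc_cover (H i) (F \<inter> gedges (H i)))"
    using m even_cover_part[OF F] unfolding block_edges by (intro sum_mono) simp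
  then show ?thesis using exc_cover_closure_eq_sum[OF F] by simp
qed

lemma INF_exc_cover_closure:
  assumes ne: "\<And>i. i \<in> {1..k} \<Longrightarrow> \<exists>F. even_cover (H i) F \<and> (None \<in> F \<longleftrightarrow> b)"
  obtains m where
    "\<And>i. i \<in> {1..k} \<Longrightarrow> (INF F\<in>{F. even_cover (H i) F \<and> (None \<in> F \<longleftrightarrow> b)}. ereal (real (exc_cover (H i) F)))
        = ereal (real (m i))"
    "(INF F\<in>{F. even_cover G F \<and> (None \<in> F \<longleftrightarrow> b)}. ereal (real (exc_cover G F)))
        = ereal ((\<Sum>i\<in>{1..k}. real (m i)) - (if b then 2 * (real k - 1) else 0))"
proof -
  let ?S = "\<lambda>X. {F. even_cover X F \<and> (None \<in> F \<longleftrightarrow> b)}"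
  let ?c = "if b then 2 * (k - 1) else 0"
  have "\<exists>F0. F0 \<in> ?S (H i) \<and> (\<forall>F\<in>?S (H i). exc_cover (H i) F0 \<le> exc_cover (H i) F)"
    if i: "i \<in> {1..k}" for i
    using ex_min_exc_cover[OF wf_block[OF i] ne[OF i]] by simp
  then have "\<forall>i\<in>{1..k}. \<exists>F0. F0 \<in> ?S (H i) \<and> (\<forall>F\<in>?S (H i). exc_cover (H i) F0 \<le> exc_cover (H i) F)"
    by blast
  then obtain Fs where Fs_min:
    "\<forall>i\<in>{1..k}. Fs i \<in> ?S (H i) \<and> (\<forall>F\<in>?S (H i). exc_cover (H i) (Fs i) \<le> exc_cover (H i) F)"
    by (rule bchoice[THEN exE])
  then have Fs: "\<And>i. i \<in> {1..k} \<Longrightarrow> even_cover (H i) (Fs i)" "\<And>i. i \<in> {1..k} \<Longrightarrow> None \<in> Fs i \<longleftrightarrow> b"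
    by simp_all
  have INF_block: "(INF F\<in>?S (H i). ereal (real (exc_cover (H i) F))) = ereal (real (exc_cover (H i) (Fs i)))"
    if "i \<in> {1..k}" for i
    using Fs_min that by (intro antisym INF_lower INF_greatest) auto
  define F where "F = (\<Union>i\<in>{1..k}. Fs i) \<union> (if b then ring else {})"
  note glued = glue_block_covers[OF Fs, folded F_def]
  have exc_F: "exc_cover G F + ?c = (\<Sum>i\<in>{1..k}. exc_cover (H i) (Fs i))"
    using exc_cover_closure_eq_sum[OF glued(1)] glued(2,3) by simp
  have "exc_cover G F \<le> exc_cover G F'" if F': "even_cover G F'" "None \<in> F' \<longleftrightarrow> b" for F'
  proof -
    have "(\<Sum>i\<in>{1..k}. exc_cover (H i) (Fs i)) \<le> exc_cover G F' + (if None \<in> F' then 2 * (k - 1) else 0)"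
    proof (rule exc_cover_closure_lower_bound[OF F'(1)])
      fix i F'' assume "i \<in> {1..k}" "even_cover (H i) F''" "None \<in> F'' \<longleftrightarrow> None \<in> F'"
      then show "exc_cover (H i) (Fs i) \<le> exc_cover (H i) F''" using Fs_min F'(2) by auto
    qed
    then show ?thesis using exc_F F'(2) by simp
  qed
  then have "(INF F\<in>?S G. ereal (real (exc_cover G F))) = ereal (real (exc_cover G F))"
    using glued(1,2) by (intro antisym INF_lower INF_greatest) auto
  moreover have "real (exc_cover G F)
      = (\<Sum>i\<in>{1..k}. real (exc_cover (H i) (Fs i))) - (if b then 2 * (real k - 1) else 0)"
    using arg_cong[OF exc_F, of real] k_ge_2 by (auto simp: of_nat_diff)
  ultimately show ?thesis using that[of "\<lambda>i. exc_cover (H i) (Fs i)"] INF_block by simp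
qed

lemma delta_closure:
  assumes "\<And>i. i \<in> {1..k} \<Longrightarrow> \<exists>F. even_cover (H i) F \<and> None \<in> F"
  shows "delta G None = (\<Sum>i\<in>{1..k}. delta (H i) None)"
proof -
  obtain m where
    m: "\<And>i. i \<in> {1..k} \<Longrightarrow>
      (INF F\<in>{F. even_cover (H i) F \<and> None \<in> F}. ereal (real (exc_cover (H i) F))) = ereal (real (m i))"
    and mG: "(INF F\<in>{F. even_cover G F \<and> None \<in> F}. ereal (real (exc_cover G F)))
      = ereal ((\<Sum>i\<in>{1..k}. real (m i)) - 2 * (real k - 1))"
    using INF_exc_cover_closure[of True] assms by auto
  have "(\<Sum>i\<in>{1..k}. delta (H i) None) = (\<Sum>i\<in>{1..k}. ereal (real (m i) - 2 - vertex_weight (H i)))"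
    using m unfolding delta_eq exc_with_def by (intro sum.cong) auto
  also have "\<dots> = delta G None"
    using mG vertex_weight_closure unfolding delta_eq exc_with_def by (simp add: sum_subtractf)
  finally show ?thesis ..
qed

lemma delta_hat_closure:
  assumes "\<And>i. i \<in> {1..k} \<Longrightarrow> \<exists>F. even_cover (H i) F \<and> None \<notin> F"
  shows "delta_hat G None = (\<Sum>i\<in>{1..k}. delta_hat (H i) None)"
proof -
  obtain m where
    m: "\<And>i. i \<in> {1..k} \<Longrightarrow>
      (INF F\<in>{F. even_cover (H i) F \<and> None \<notin> F}. ereal (real (exc_cover (H i) F))) = ereal (real (m i))"
    and mG: "(INF F\<in>{F. even_cover G F \<and> None \<notin> F}. ereal (real (exc_cover G F)))
      = ereal (\<Sum>i\<in>{1..k}. real (m i))"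
    using INF_exc_cover_closure[of False] assms by auto
  have "(\<Sum>i\<in>{1..k}. delta_hat (H i) None) = (\<Sum>i\<in>{1..k}. ereal (real (m i) - vertex_weight (H i)))"
    using m unfolding delta_hat_eq exc_without_def by (intro sum.cong) auto
  also have "\<dots> = delta_hat G None"
    using mG vertex_weight_closure unfolding delta_hat_eq exc_without_def by (simp add: sum_subtractf)
  finally show ?thesis ..
qed

end

context nontrivial_chain
begin

lemma closure_sum_eq_sum_blocks:
  assumes "\<And>i. i \<in> {1..k} \<Longrightarrow> delta (H i) None + delta_hat (H i) None \<le> 0"
  shows "closure_sum C k xs ys = (\<Sum>i\<in>{1..k}. delta (H i) None + delta_hat (H i) None)"
proof (cases "k = 1")
  case True
  then show ?thesis unfolding closure_sum_def using closure_eq_block_if_single by simp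
next
  case False
  then interpret long_chain C k es Bs xs ys by unfold_locales (use k_pos in auto)
  have "delta G None = (\<Sum>i\<in>{1..k}. delta (H i) None)"
    using delta_closure even_covers_exist_if_delta_sum_nonpos(1)[OF assms] by blast
  moreover have "delta_hat G None = (\<Sum>i\<in>{1..k}. delta_hat (H i) None)"
    using delta_hat_closure even_covers_exist_if_delta_sum_nonpos(2)[OF assms] by blast
  ultimately show ?thesis using k_pos unfolding closure_sum_def by (simp add: sum.distrib)
qed

end

theorem proposition2p3:
  fixes C :: "('v, 'e) mgraph" and k :: nat and es :: "nat \<Rightarrow> 'e"
    and Bs :: "nat \<Rightarrow> 'v set" and xs ys :: "nat \<Rightarrow> 'v"
  assumes "subcubic_chain C k es Bs xs ys"
    and "\<forall>i\<in>{1..k}. delta (chain_block C k es Bs xs ys i) None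
                     + delta_hat (chain_block C k es Bs xs ys i) None \<le> 0"
  shows "closure_sum C k xs ys \<le> 0 \<and>
         (closure_sum C k xs ys = 0 \<longleftrightarrow>
            (\<forall>i\<in>{1..k}. delta (chain_block C k es Bs xs ys i) None
                        + delta_hat (chain_block C k es Bs xs ys i) None = 0))"
proof (cases "k = 0")
  case True
  then show ?thesis unfolding closure_sum_def by simp
next
  case False
  then interpret nontrivial_chain C k es Bs xs ys
    using assms(1) by unfold_locales auto
  have "closure_sum C k xs ys
      = (\<Sum>i\<in>{1..k}. delta (H i) None + delta_hat (H i) None)"
    using closure_sum_eq_sum_blocks assms(2) by blast
  moreover have "delta (H i) None + delta_hat (H i) None \<le> 0" if "i \<in> {1..k}" for i
    using assms(2) that by blast
  ultimately show ?thesis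
    using sum_nonpos[of "{1..k}" "\<lambda>i. delta (H i) None + delta_hat (H i) None"]
      sum_nonpos_eq_0_iff[of "{1..k}" "\<lambda>i. delta (H i) None + delta_hat (H i) None"] by simp
qed

end
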